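(* Let $(G,u)$ be a simple dimension group with order unit $u$. Then $\mathbb Q(G,u)=\mathbb Z u$ if and only if there is no $x\in G$ and integer $n$ with $|n|\ge2$ such that $nx=u$.
   Context: A dimension group is an unperforated partially ordered abelian group with the Riesz interpolation property; simple means no nontrivial order ideals. The rational subgroup is $\mathbb Q(G,u)=\{g\in G: pg=mu\text{ for some nonzero } p\in\mathbb Z,\ m\in\mathbb Z\}$. *)

theory Defs
  imports Main
begin

text \<open>The ambient partially ordered abelian group G is the whole type 'a of class
ordered_ab_group_add (an abelian group with a partial order compatible with addition).\<close>

definition nmult :: "nat \<Rightarrow> 'a::ab_group_add \<Rightarrow> 'a" where
  "nmult n x = (\<Sum>i<n. x)"

definition zmult :: "int \<Rightarrow> 'a::ab_group_add \<Rightarrow> 'a" where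
  "zmult n x = (if 0 \<le> n then nmult (nat n) x else - nmult (nat (- n)) x)"

definition unperforated :: "'a::ordered_ab_group_add itself \<Rightarrow> bool" where
  "unperforated _ \<longleftrightarrow> (\<forall>(n::nat) (x::'a). 0 < n \<longrightarrow> 0 \<le> nmult n x \<longrightarrow> 0 \<le> x)"

definition riesz_interpolation :: "'a::ordered_ab_group_add itself \<Rightarrow> bool" where
  "riesz_interpolation _ \<longleftrightarrow>
     (\<forall>(a1::'a) a2 b1 b2. a1 \<le> b1 \<and> a1 \<le> b2 \<and> a2 \<le> b1 \<and> a2 \<le> b2 \<longrightarrow>
        (\<exists>c. a1 \<le> c \<and> a2 \<le> c \<and> c \<le> b1 \<and> c \<le> b2))"

definition dimension_group :: "'a::ordered_ab_group_add itself \<Rightarrow> bool" where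
  "dimension_group T \<longleftrightarrow> unperforated T \<and> riesz_interpolation T"

definition order_ideal :: "'a::ordered_ab_group_add set \<Rightarrow> bool" where
  "order_ideal I \<longleftrightarrow>
     0 \<in> I \<and> (\<forall>x\<in>I. \<forall>y\<in>I. x + y \<in> I) \<and> (\<forall>x\<in>I. - x \<in> I) \<and>
     (\<forall>a b. 0 \<le> a \<and> a \<le> b \<and> b \<in> I \<longrightarrow> a \<in> I) \<and>
     (\<forall>x\<in>I. \<exists>a\<in>I. \<exists>b\<in>I. 0 \<le> a \<and> 0 \<le> b \<and> x = a - b)"

definition simple_pog :: "'a::ordered_ab_group_add itself \<Rightarrow> bool" where
  "simple_pog _ \<longleftrightarrow> (UNIV::'a set) \<noteq> {0} \<and>
     (\<forall>I::'a set. order_ideal I \<longrightarrow> I = {0} \<or> I = UNIV)"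

definition order_unit :: "'a::ordered_ab_group_add \<Rightarrow> bool" where
  "order_unit u \<longleftrightarrow> 0 \<le> u \<and> (\<forall>g. \<exists>n::nat. g \<le> nmult n u)"

definition rational_subgroup :: "'a::ordered_ab_group_add \<Rightarrow> 'a set" where
  "rational_subgroup u = {g. \<exists>p m::int. p \<noteq> 0 \<and> zmult p g = zmult m u}"

end

theory Submission
  imports Defs
begin

text \<open>Only unperforation and $u \neq 0$ matter: an unperforated group is torsion free, so a
rational element $g$ with $p g = m u$ may be assumed to have $\gcd(p, m) = 1$.  Choosing
B\'ezout coefficients $a p + b m = 1$ gives $u = p (a u + b g)$, so $u$ is $p$-divisible;
if $u$ has no divisors of absolute value $\geq 2$ then $p = \pm 1$ and $g = \pm m u$.
Conversely, if $n x = u$ with $|n| \geq 2$ and $x = k u$, then $(n k - 1) u = 0$ forces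
$n k = 1$, which is impossible.\<close>

lemma nmult_0 [simp]: "nmult 0 x = 0"
  by (simp add: nmult_def)

lemma nmult_Suc: "nmult (Suc n) x = nmult n x + x"
  by (simp add: nmult_def)

lemma zmult_0_left [simp]: "zmult 0 x = 0"
  by (simp add: zmult_def)

lemma zmult_succ: "zmult (k + 1) x = zmult k x + x"
proof (cases "0 \<le> k")
  case True
  then have "nat (k + 1) = Suc (nat k)" by simp
  with True show ?thesis by (simp add: zmult_def nmult_Suc)
next
  case False
  show ?thesis
  proof (cases "k = -1")
    case True
    then show ?thesis by (simp add: zmult_def nmult_Suc)
  next
    case False
    with \<open>\<not> 0 \<le> k\<close> have "nat (- k) = Suc (nat (- (k + 1)))" by simp
    with \<open>\<not> 0 \<le> k\<close> False show ?thesis by (simp add: zmult_def nmult_Suc)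
  qed
qed

lemma zmult_pred: "zmult (k - 1) x = zmult k x - x"
  using zmult_succ [of "k - 1" x] by (simp add: algebra_simps)

lemma zmult_1 [simp]: "zmult 1 x = x"
  using zmult_succ [of 0 x] by simp

lemma zmult_add_left: "zmult (a + b) x = zmult a x + zmult b x"
proof (induction b rule: int_induct [where k = 0])
  case base
  then show ?case by simp
next
  case (step1 i)
  then show ?case
    using zmult_succ [of "a + i" x] zmult_succ [of i x] by (simp add: algebra_simps)
next
  case (step2 i)
  have "zmult (a + (i - 1)) x = zmult (a + i) x - x"
    by (metis add_diff_eq zmult_pred)
  then show ?case
    using step2 by (simp add: zmult_pred add_diff_eq)
qed

lemma zmult_minus_left: "zmult (- a) x = - zmult a x"
  using zmult_add_left [of a "- a" x] by (simp add: eq_neg_iff_add_eq_0 add.commute)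

lemma zmult_add_right: "zmult a (y + z) = zmult a y + zmult a z"
proof (induction a rule: int_induct [where k = 0])
  case base
  then show ?case by simp
next
  case (step1 i)
  then show ?case
    using zmult_succ [of i "y + z"] zmult_succ [of i y] zmult_succ [of i z]
    by (simp add: algebra_simps)
next
  case (step2 i)
  then show ?case by (simp only: zmult_pred) (simp add: algebra_simps)
qed

lemma zmult_0_right [simp]: "zmult a (0::'a::ab_group_add) = 0"
  using zmult_add_right [of a "0::'a" 0] by simp

lemma zmult_minus_right: "zmult a (- y) = - zmult a y"
  using zmult_add_right [of a y "- y"] by (simp add: eq_neg_iff_add_eq_0 add.commute)

lemma zmult_diff_right: "zmult a (y - z) = zmult a y - zmult a z"
  using zmult_add_right [of a y "- z"] zmult_minus_right [of a z] by simp

lemma zmult_mult: "zmult (a * b) x = zmult a (zmult b x)"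
proof (induction a rule: int_induct [where k = 0])
  case base
  then show ?case by simp
next
  case (step1 i)
  then show ?case
    using zmult_succ [of i "zmult b x"] zmult_add_left [of "i * b" b x]
    by (simp add: algebra_simps)
next
  case (step2 i)
  have "zmult ((i - 1) * b) x = zmult (i * b) x + zmult (- b) x"
    by (metis zmult_add_left diff_conv_add_uminus mult_minus_left distrib_right mult_1)
  then show ?case
    using step2 by (simp only: zmult_pred zmult_minus_left) (simp add: algebra_simps)
qed

lemma unperforated_nmult_eq_0:
  fixes y :: "'a::ordered_ab_group_add"
  assumes "unperforated TYPE('a)" and "0 < n" and "nmult n y = 0"
  shows "y = 0"
proof -
  have nonneg: "0 \<le> nmult n x \<Longrightarrow> 0 \<le> x" for x :: 'a
    using assms(1,2) unfolding unperforated_def by blast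
  have "nmult n (- y) = 0"
    using assms(3) by (simp add: nmult_def sum_negf)
  then have "0 \<le> y" and "0 \<le> - y"
    using assms(3) nonneg [of y] nonneg [of "- y"] by simp_all
  then show "y = 0" by (simp add: order.antisym)
qed

lemma unperforated_zmult_eq_0:
  fixes y :: "'a::ordered_ab_group_add"
  assumes "unperforated TYPE('a)" and "d \<noteq> 0" and "zmult d y = 0"
  shows "y = 0"
proof -
  have "nmult (nat \<bar>d\<bar>) y = 0"
    using assms(3) by (cases "0 \<le> d") (simp_all add: zmult_def)
  moreover have "0 < nat \<bar>d\<bar>" using assms(2) by simp
  ultimately show ?thesis
    using unperforated_nmult_eq_0 [OF assms(1)] by blast
qed

lemma unperforated_zmult_cancel:
  fixes x y :: "'a::ordered_ab_group_add"
  assumes "unperforated TYPE('a)" and "d \<noteq> 0" and "zmult d x = zmult d y"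
  shows "x = y"
  using unperforated_zmult_eq_0 [OF assms(1,2), of "x - y"] assms(3)
  by (simp add: zmult_diff_right)

lemma zmult_bezout_divides:
  assumes "zmult p g = zmult m u" and "a * p + b * m = 1"
  shows "u = zmult p (zmult a u + zmult b g)"
proof -
  have "u = zmult (a * p + b * m) u" using assms(2) by simp
  also have "\<dots> = zmult a (zmult p u) + zmult b (zmult p g)"
    using assms(1) by (simp add: zmult_add_left zmult_mult [symmetric] mult.commute)
  also have "\<dots> = zmult p (zmult a u + zmult b g)"
    by (simp add: zmult_add_right zmult_mult [symmetric] mult.commute)
  finally show ?thesis .
qed

lemma rational_subgroup_coprime_representation:
  fixes u :: "'a::ordered_ab_group_add"
  assumes "unperforated TYPE('a)" and "g \<in> rational_subgroup u"
  obtains p m where "p \<noteq> 0" and "coprime p m" and "zmult p g = zmult m u"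
proof -
  from assms(2) obtain p m :: int where "p \<noteq> 0" and pm: "zmult p g = zmult m u"
    by (auto simp: rational_subgroup_def)
  then have "gcd p m \<noteq> 0" by simp
  then obtain p' m' where p: "p = p' * gcd p m" and m: "m = m' * gcd p m"
    and "coprime p' m'"
    using gcd_coprime_exists by blast
  have "zmult (gcd p m) (zmult p' g) = zmult (gcd p m) (zmult m' u)"
    using pm p m by (metis mult.commute zmult_mult)
  then have "zmult p' g = zmult m' u"
    using unperforated_zmult_cancel [OF assms(1) \<open>gcd p m \<noteq> 0\<close>] by blast
  moreover have "p' \<noteq> 0" using \<open>p \<noteq> 0\<close> p by auto
  ultimately show ?thesis using \<open>coprime p' m'\<close> that by blast
qed

lemma multiples_subset_rational_subgroup:
  "range (\<lambda>k::int. zmult k u) \<subseteq> rational_subgroup u"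
  by (force simp: rational_subgroup_def intro: exI [of _ "1::int"])

lemma rational_subgroup_subset_multiples:
  fixes u :: "'a::ordered_ab_group_add"
  assumes "unperforated TYPE('a)"
    and indivisible: "\<not> (\<exists>(x::'a) (n::int). \<bar>n\<bar> \<ge> 2 \<and> zmult n x = u)"
  shows "rational_subgroup u \<subseteq> range (\<lambda>k::int. zmult k u)"
proof
  fix g assume "g \<in> rational_subgroup u"
  then obtain p m where "p \<noteq> 0" and "coprime p m" and pm: "zmult p g = zmult m u"
    using rational_subgroup_coprime_representation [OF assms(1)] by blast
  obtain a b where "a * p + b * m = 1"
    using bezout_int [of p m] \<open>coprime p m\<close> by (auto simp: coprime_iff_gcd_eq_1)
  then have "u = zmult p (zmult a u + zmult b g)"
    by (rule zmult_bezout_divides [OF pm])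
  with indivisible have "\<bar>p\<bar> < 2" by (metis not_less)
  with \<open>p \<noteq> 0\<close> have "p = 1 \<or> p = - 1" by linarith
  then have "p * p = 1" by auto
  moreover have "zmult (p * m) u = zmult (p * p) g"
    by (simp add: zmult_mult pm)
  ultimately show "g \<in> range (\<lambda>k::int. zmult k u)"
    by (metis rangeI zmult_1)
qed

lemma divisor_not_multiple:
  fixes u :: "'a::ordered_ab_group_add"
  assumes "unperforated TYPE('a)" and "u \<noteq> 0" and "\<bar>n\<bar> \<ge> 2" and "zmult n x = u"
  shows "x \<notin> range (\<lambda>k::int. zmult k u)"
proof
  assume "x \<in> range (\<lambda>k::int. zmult k u)"
  then obtain k where "x = zmult k u" by blast
  with assms(4) have "zmult (n * k) u = u" by (simp add: zmult_mult)
  then have "zmult (n * k - 1) u = 0" by (simp add: zmult_pred)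
  with assms(1,2) have "n * k = 1"
    using unperforated_zmult_eq_0 [of "n * k - 1" u] by auto
  with assms(3) show False by (auto simp: zmult_eq_1_iff)
qed

lemma divisor_in_rational_subgroup:
  assumes "n \<noteq> 0" and "zmult n x = u"
  shows "x \<in> rational_subgroup u"
  using assms unfolding rational_subgroup_def by (force intro: exI [of _ 1])

lemma rational_subgroup_eq_multiples_iff:
  fixes u :: "'a::ordered_ab_group_add"
  assumes "unperforated TYPE('a)" and "u \<noteq> 0"
  shows "rational_subgroup u = range (\<lambda>k::int. zmult k u) \<longleftrightarrow>
         \<not> (\<exists>(x::'a) (n::int). \<bar>n\<bar> \<ge> 2 \<and> zmult n x = u)"
proof
  assume eq: "rational_subgroup u = range (\<lambda>k::int. zmult k u)"
  show "\<not> (\<exists>(x::'a) (n::int). \<bar>n\<bar> \<ge> 2 \<and> zmult n x = u)"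
  proof
    assume "\<exists>(x::'a) (n::int). \<bar>n\<bar> \<ge> 2 \<and> zmult n x = u"
    then obtain x n where n: "\<bar>n\<bar> \<ge> 2" "zmult n x = u" by blast
    then have "x \<in> rational_subgroup u"
      by (intro divisor_in_rational_subgroup) auto
    with eq divisor_not_multiple [OF assms n] show False by blast
  qed
next
  assume "\<not> (\<exists>(x::'a) (n::int). \<bar>n\<bar> \<ge> 2 \<and> zmult n x = u)"
  then show "rational_subgroup u = range (\<lambda>k::int. zmult k u)"
    using rational_subgroup_subset_multiples [OF assms(1)] multiples_subset_rational_subgroup
    by blast
qed

lemma order_unit_nonzero:
  fixes u :: "'a::ordered_ab_group_add"
  assumes "UNIV \<noteq> {0::'a}" and "order_unit u"
  shows "u \<noteq> 0"
proof
  assume "u = 0"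
  with assms(2) have "g \<le> 0" for g :: 'a by (simp add: order_unit_def nmult_def)
  then have "g = 0" for g :: 'a by (metis neg_le_0_iff_le order_antisym)
  with assms(1) show False by auto
qed

theorem mainTheorem17:
  fixes u :: "'a::ordered_ab_group_add"
  assumes "dimension_group TYPE('a)"
    and "simple_pog TYPE('a)"
    and "order_unit u"
  shows "rational_subgroup u = range (\<lambda>k::int. zmult k u) \<longleftrightarrow>
         \<not> (\<exists>(x::'a) (n::int). \<bar>n\<bar> \<ge> 2 \<and> zmult n x = u)"
proof (rule rational_subgroup_eq_multiples_iff)
  show "unperforated TYPE('a)" using assms(1) by (simp add: dimension_group_def)
  show "u \<noteq> 0"
    using assms(2,3) by (intro order_unit_nonzero) (simp_all add: simple_pog_def)
qed

end
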